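(* Let $G$ be a group and $(\rho,V)$ a linear representation of $G$ on a finite-dimensional vector space $V$ over a field $k$. Let $Y$ be a $k$-subspace of $V$ and set \[\mu=\inf_{A\in\mathcal{P}_{\mathrm{fin}}(G)\setminus\{\emptyset\}}\frac{\dim(A\cdot Y)}{|A|}.\] Then either $\mu=0$, or for every $\lambda\in[0,\mu]$ there exists a finite subgroup $H$ of $G$ containing $G_Y$ such that \[\dim(A\cdot Y)\geq\lambda|A|+\dim(H\cdot Y)-\lambda|H|\geq\lambda|A|+\dim(Y)-\lambda|H|\] for every nonempty finite subset $A$ of $G$.
   Context: $g\cdot v=\rho(g)v$. For $A\subset G$, $A\cdot Y$ denotes the $k$-subspace spanned by $\{a\cdot v\mid a\in A,v\in Y\}$, and $\dim(A\cdot Y)$ its dimension. $G_Y=\{g\in G\mid g\cdot Y=Y\}$. $\mathcal{P}_{\mathrm{fin}}(G)$ is the set of finite subsets of $G$. *)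

theory Defs
  imports Complex_Main "HOL-Algebra.Group"
begin

definition is_rep :: "('g, 'm) monoid_scheme \<Rightarrow> ('k::field \<Rightarrow> 'v::ab_group_add \<Rightarrow> 'v) \<Rightarrow> ('g \<Rightarrow> 'v \<Rightarrow> 'v) \<Rightarrow> bool" where
  "is_rep G scale \<rho> \<longleftrightarrow>
     (\<forall>g\<in>carrier G. Vector_Spaces.linear scale scale (\<rho> g)) \<and>
     (\<forall>g\<in>carrier G. \<forall>h\<in>carrier G. \<rho> (g \<otimes>\<^bsub>G\<^esub> h) = \<rho> g \<circ> \<rho> h) \<and>
     \<rho> \<one>\<^bsub>G\<^esub> = id"

definition act_span :: "('k::field \<Rightarrow> 'v::ab_group_add \<Rightarrow> 'v) \<Rightarrow> ('g \<Rightarrow> 'v \<Rightarrow> 'v) \<Rightarrow> 'g set \<Rightarrow> 'v set \<Rightarrow> 'v set" where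
  "act_span scale \<rho> A Y = module.span scale {\<rho> a v | a v. a \<in> A \<and> v \<in> Y}"

definition stab :: "('g, 'm) monoid_scheme \<Rightarrow> ('k::field \<Rightarrow> 'v::ab_group_add \<Rightarrow> 'v) \<Rightarrow> ('g \<Rightarrow> 'v \<Rightarrow> 'v) \<Rightarrow> 'v set \<Rightarrow> 'g set" where
  "stab G scale \<rho> Y = {g \<in> carrier G. act_span scale \<rho> {g} Y = Y}"

end

theory Submission
  imports Defs "HOL-Algebra.Coset"
begin

text \<open>If \<open>\<mu> > 0\<close>, then \<open>\<mu> |A| \<le> dim (A \<cdot> Y) \<le> dim V\<close> bounds the size of every finite
  \<open>A \<subseteq> G\<close>, so \<open>G\<close> is finite. For \<open>\<lambda> \<ge> 0\<close> the function \<open>f A = dim (A \<cdot> Y) - \<lambda> |A|\<close> is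
  invariant under left translation and submodular on subsets of \<open>G\<close>, since \<open>A \<mapsto> A \<cdot> Y\<close>
  turns unions into sums and intersections into subspaces of intersections. Among the
  nonempty minimisers of \<open>f\<close> take one of largest cardinality, translated to contain \<open>1\<close>.
  Submodularity forces it to absorb every minimiser it meets, in particular its own left
  translates, so it is a subgroup \<open>H\<close>; and for \<open>s \<in> G\<^sub>Y\<close> the set \<open>H \<union> H s\<close> is again a
  minimiser, whence \<open>s \<in> H\<close>.\<close>

lemma finite_if_scaled_card_bounded:
  fixes c N :: real
  assumes "0 < c" and bound: "\<And>A. A \<subseteq> S \<Longrightarrow> finite A \<Longrightarrow> A \<noteq> {} \<Longrightarrow> c * real (card A) \<le> N"
  shows "finite S"
proof -
  have "card A \<le> nat \<lfloor>N / c\<rfloor>" if "A \<subseteq> S" "finite A" for A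
  proof (cases "A = {}")
    case False
    then have "real (card A) \<le> N / c"
      using bound[OF that] \<open>0 < c\<close> by (simp add: le_divide_eq mult.commute)
    then show ?thesis by (rule le_nat_floor)
  qed simp
  then show ?thesis using finite_if_finite_subsets_card_bdd by blast
qed

lemma finite_if_Inf_card_ratio_nonzero:
  fixes d :: "'a set \<Rightarrow> nat"
  assumes "Inf {real (d A) / real (card A) | A. A \<subseteq> S \<and> finite A \<and> A \<noteq> {}} \<noteq> 0" (is "?\<mu> \<noteq> 0")
    and bounded: "\<And>A. d A \<le> N"
  shows "finite S"
proof (cases "S = {}")
  case False
  then obtain x where "{x} \<subseteq> S" by blast
  then have "0 \<le> ?\<mu>" by (intro cInf_greatest) auto
  then have "0 < ?\<mu>" using assms(1) by linarith
  moreover have "?\<mu> * real (card A) \<le> real N" if "A \<subseteq> S" "finite A" "A \<noteq> {}" for A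
  proof -
    have "?\<mu> \<le> real (d A) / real (card A)"
      using that by (intro cInf_lower) (auto intro: bdd_belowI[where m = 0])
    then have "?\<mu> * real (card A) \<le> real (d A)" using that by (simp add: le_divide_eq card_gt_0_iff)
    also have "\<dots> \<le> real N" using bounded by simp
    finally show ?thesis .
  qed
  ultimately show ?thesis by (rule finite_if_scaled_card_bounded)
qed simp

context vector_space
begin

lemma obtain_finite_dimensional_basis:
  assumes "finite B" "span B = UNIV"
  obtains Basis where "finite_dimensional_vector_space scale Basis"
proof -
  obtain Basis where "independent Basis" "UNIV \<subseteq> span Basis"
    using basis_exists[of UNIV] by blast
  moreover have "finite Basis"
    using independent_span_bound[of B Basis] assms calculation by auto
  ultimately show ?thesis
    by (intro that) (unfold_locales, auto)
qed

end

context finite_dimensional_vector_space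
begin

lemma dim_Un_add_dim_Int:
  assumes "subspace S" "subspace T"
  shows "dim (S \<union> T) + dim (S \<inter> T) = dim S + dim T"
proof -
  have spans: "span S = S" "span T = T" using assms by simp_all
  have "span (S \<union> T) = {x + y | x y. x \<in> S \<and> y \<in> T}"
    by (subst span_Un) (simp only: spans)
  then show ?thesis using dim_sums_Int[OF assms] dim_span[of "S \<union> T"] by simp
qed

end

context group
begin

lemma l_coset_eq_image: "a <# A = (\<otimes>) a ` A"
  by (auto simp: l_coset_def)

lemma card_l_coset: "a \<in> carrier G \<Longrightarrow> A \<subseteq> carrier G \<Longrightarrow> card (a <# A) = card A"
  by (simp add: l_coset_eq_image) (meson card_image inj_on_cmult inj_on_subset)

lemma subgroupI_finite:
  assumes "finite H" "H \<subseteq> carrier G" "H \<noteq> {}"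
    and mult: "\<And>a b. a \<in> H \<Longrightarrow> b \<in> H \<Longrightarrow> a \<otimes> b \<in> H"
  shows "subgroup H G"
proof (rule subgroupI)
  have translate: "a <# H = H" if "a \<in> H" for a
  proof -
    have "a <# H \<subseteq> H" using mult that by (auto simp: l_coset_eq_image)
    moreover have "card (a <# H) = card H" using that assms by (auto intro: card_l_coset)
    ultimately show ?thesis using \<open>finite H\<close> by (simp add: card_subset_eq)
  qed
  fix a assume a: "a \<in> H"
  then have ac: "a \<in> carrier G" using assms by auto
  have "a \<in> (\<otimes>) a ` H" using translate[OF a] a by (simp add: l_coset_eq_image)
  then obtain e where "e \<in> H" "a \<otimes> e = a" by auto
  then have "\<one> \<in> H" using ac assms by (metis l_cancel_one subsetD)
  then have "\<one> \<in> (\<otimes>) a ` H" using translate[OF a] by (simp add: l_coset_eq_image)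
  then obtain x where "x \<in> H" "a \<otimes> x = \<one>" by auto
  then show "inv a \<in> H" using ac assms by (metis inv_closed inv_solve_left one_closed r_one subsetD)
qed (use assms in auto)

lemma submodular_invariant_minimiser_subgroup:
  fixes f :: "'a set \<Rightarrow> real"
  assumes fin: "finite (carrier G)"
    and invariant: "\<And>g A. g \<in> carrier G \<Longrightarrow> A \<subseteq> carrier G \<Longrightarrow> f (g <# A) = f A"
    and submodular: "\<And>A B. A \<subseteq> carrier G \<Longrightarrow> B \<subseteq> carrier G \<Longrightarrow> A \<inter> B \<noteq> {} \<Longrightarrow>
      f (A \<union> B) + f (A \<inter> B) \<le> f A + f B"
  obtains H where "subgroup H G"
    and "\<And>A. A \<subseteq> carrier G \<Longrightarrow> A \<noteq> {} \<Longrightarrow> f H \<le> f A"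
    and "\<And>K. K \<subseteq> carrier G \<Longrightarrow> H \<subseteq> K \<Longrightarrow> f K \<le> f H \<Longrightarrow> K = H"
proof -
  define Fam where "Fam = {A. A \<subseteq> carrier G \<and> A \<noteq> {}}"
  have "finite Fam" using fin unfolding Fam_def by (auto intro: finite_subset[of _ "Pow (carrier G)"])
  moreover have "carrier G \<in> Fam" unfolding Fam_def by auto
  ultimately obtain H0 where H0: "H0 \<in> Fam" "\<And>A. A \<in> Fam \<Longrightarrow> f H0 \<le> f A"
    using ex_is_arg_min_if_finite[of Fam f] by (auto simp: is_arg_min_linorder)
  define M where "M = {A \<in> Fam. f A = f H0}"
  have "finite M" "H0 \<in> M" using \<open>finite Fam\<close> H0 unfolding M_def by auto
  then have "Max (card ` M) \<in> card ` M" by (intro Max_in) auto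
  then obtain H1 where H1: "H1 \<in> M" "card H1 = Max (card ` M)" by auto
  obtain a where a: "a \<in> H1" "a \<in> carrier G" using H1 unfolding M_def Fam_def by auto
  define H where "H = inv a <# H1"
  have H_carrier: "H \<subseteq> carrier G" and H_min: "f H = f H0" and H_card: "card H = card H1"
    using H1 a invariant card_l_coset l_coset_subset_G unfolding H_def M_def Fam_def by auto
  have one_H: "\<one> \<in> H" using a unfolding H_def l_coset_eq_image by (auto intro: image_eqI[of _ _ a])
  have minimal: "f H \<le> f A" if "A \<subseteq> carrier G" "A \<noteq> {}" for A
    using H0 H_min that unfolding Fam_def by auto
  have maximal: "K = H" if K: "K \<subseteq> carrier G" "H \<subseteq> K" "f K \<le> f H" for K
  proof -
    have "K \<noteq> {}" using K(2) one_H by auto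
    then have "K \<in> M" using K minimal[of K] H_min unfolding M_def Fam_def by auto
    then have "card K \<le> card H" using \<open>finite M\<close> H_card H1(2) by simp
    moreover have "finite K" using K(1) fin by (rule finite_subset)
    ultimately show ?thesis using K(2) card_subset_eq card_mono by (metis le_antisym)
  qed
  have absorb: "K \<subseteq> H" if K: "K \<subseteq> carrier G" "f K \<le> f H" "K \<inter> H \<noteq> {}" for K
  proof -
    have "f (H \<union> K) + f (H \<inter> K) \<le> f H + f K" using submodular H_carrier K by (simp add: Int_commute)
    moreover have "f H \<le> f (H \<inter> K)" using minimal[of "H \<inter> K"] K H_carrier by (auto simp: Int_commute)
    ultimately have "H \<union> K = H" using maximal[of "H \<union> K"] K H_carrier by auto
    then show ?thesis by blast
  qed
  have "subgroup H G"
  proof (rule subgroupI_finite)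
    show "finite H" using fin H_carrier finite_subset by auto
    fix b c assume "b \<in> H" "c \<in> H"
    then have b: "b \<in> carrier G" using H_carrier by auto
    have "b <# H \<subseteq> H"
    proof (rule absorb)
      show "b <# H \<subseteq> carrier G" using l_coset_subset_G[OF H_carrier b] .
      show "f (b <# H) \<le> f H" using invariant[OF b H_carrier] by simp
      have "b \<otimes> \<one> \<in> b <# H" using one_H by (auto simp: l_coset_eq_image)
      then show "(b <# H) \<inter> H \<noteq> {}" using b \<open>b \<in> H\<close> by auto
    qed
    then show "b \<otimes> c \<in> H" using \<open>c \<in> H\<close> by (auto simp: l_coset_eq_image)
  qed (use H_carrier one_H in auto)
  then show ?thesis using that minimal maximal by blast
qed

end

locale linear_representation = group G + finite_dimensional_vector_space scale Basis
  for G :: "('g, 'm) monoid_scheme" (structure)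
    and scale :: "'k::field \<Rightarrow> 'v::ab_group_add \<Rightarrow> 'v"
    and Basis :: "'v set" +
  fixes \<rho> :: "'g \<Rightarrow> 'v \<Rightarrow> 'v"
  assumes is_rep: "is_rep G scale \<rho>"
begin

lemma rep_linear: "g \<in> carrier G \<Longrightarrow> Vector_Spaces.linear scale scale (\<rho> g)"
  and rep_mult: "g \<in> carrier G \<Longrightarrow> h \<in> carrier G \<Longrightarrow> \<rho> (g \<otimes> h) v = \<rho> g (\<rho> h v)"
  and rep_one: "\<rho> \<one> v = v"
  using is_rep unfolding is_rep_def by auto

lemma rep_inv_cancel: "g \<in> carrier G \<Longrightarrow> \<rho> (inv g) (\<rho> g v) = v"
  by (simp flip: rep_mult add: rep_one)

lemma act_span_eq_span_UN: "act_span scale \<rho> A Y = span (\<Union>a\<in>A. \<rho> a ` Y)"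
  unfolding act_span_def by (rule arg_cong[where f = span]) blast

lemma subspace_act_span: "subspace (act_span scale \<rho> A Y)"
  unfolding act_span_def by (rule subspace_span)

lemma act_span_mono: "A \<subseteq> B \<Longrightarrow> act_span scale \<rho> A Y \<subseteq> act_span scale \<rho> B Y"
  unfolding act_span_def by (rule span_mono) blast

lemma act_span_Un_subset:
  "act_span scale \<rho> (A \<union> B) Y \<subseteq> span (act_span scale \<rho> A Y \<union> act_span scale \<rho> B Y)"
  unfolding act_span_def by (rule span_mono) (auto intro: span_base)

lemma subset_act_span: "\<one> \<in> A \<Longrightarrow> Y \<subseteq> act_span scale \<rho> A Y"
  unfolding act_span_def by (force intro: span_base simp: rep_one)

lemma dim_act_span_Un_Int:
  "dim (act_span scale \<rho> (A \<union> B) Y) + dim (act_span scale \<rho> (A \<inter> B) Y)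
    \<le> dim (act_span scale \<rho> A Y) + dim (act_span scale \<rho> B Y)"
proof -
  let ?P = "act_span scale \<rho> A Y" and ?Q = "act_span scale \<rho> B Y"
  have "dim (act_span scale \<rho> (A \<union> B) Y) \<le> dim (?P \<union> ?Q)"
    using act_span_Un_subset by (rule dim_mono)
  moreover have "dim (act_span scale \<rho> (A \<inter> B) Y) \<le> dim (?P \<inter> ?Q)"
    by (intro dim_subset) (simp add: act_span_mono)
  ultimately show ?thesis
    using dim_Un_add_dim_Int[OF subspace_act_span[of A Y] subspace_act_span[of B Y]] by linarith
qed

lemma dim_act_span_l_coset:
  assumes "g \<in> carrier G" "A \<subseteq> carrier G"
  shows "dim (act_span scale \<rho> (g <# A) Y) = dim (act_span scale \<rho> A Y)"
proof -
  interpret finite_dimensional_vector_space_pair_1 scale Basis scale ..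
  let ?gens = "\<Union>a\<in>A. \<rho> a ` Y"
  have "(\<Union>b\<in>g <# A. \<rho> b ` Y) = \<rho> g ` ?gens"
    using assms by (auto simp: l_coset_eq_image image_UN image_image rep_mult subset_iff)
  moreover have "inj_on (\<rho> g) (span ?gens)"
    by (rule inj_on_inverseI[where g = "\<rho> (inv g)"]) (simp add: rep_inv_cancel assms)
  ultimately show ?thesis
    unfolding act_span_eq_span_UN using dim_image_eq[OF rep_linear[OF assms(1)]] by simp
qed

lemma act_span_Un_r_coset_stab:
  assumes "s \<in> stab G scale \<rho> Y" "H \<subseteq> carrier G"
  shows "act_span scale \<rho> (H \<union> (H #> s)) Y = act_span scale \<rho> H Y"
proof -
  have s: "s \<in> carrier G" "act_span scale \<rho> {s} Y = Y" using assms(1) by (auto simp: stab_def)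
  then have "\<rho> s ` Y \<subseteq> Y" using span_superset[of "\<rho> s ` Y"] by (simp add: act_span_eq_span_UN)
  then have "(\<Union>b\<in>H #> s. \<rho> b ` Y) \<subseteq> (\<Union>h\<in>H. \<rho> h ` Y)"
    using assms(2) s(1) by (auto simp: r_coset_def rep_mult subset_iff)
  then have "act_span scale \<rho> (H #> s) Y \<subseteq> act_span scale \<rho> H Y"
    unfolding act_span_eq_span_UN by (rule span_mono)
  then have "act_span scale \<rho> H Y \<union> act_span scale \<rho> (H #> s) Y = act_span scale \<rho> H Y"
    by blast
  then have "act_span scale \<rho> (H \<union> (H #> s)) Y \<subseteq> span (act_span scale \<rho> H Y)"
    using act_span_Un_subset[of H "H #> s" Y] by (simp only:)
  also have "\<dots> = act_span scale \<rho> H Y" by (simp add: subspace_act_span)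
  finally show ?thesis using act_span_mono[of H "H \<union> (H #> s)" Y] by blast
qed

theorem subgroup_dim_act_span_lower_bound:
  assumes fin: "finite (carrier G)" and "0 \<le> lam"
  obtains H where "subgroup H G" "stab G scale \<rho> Y \<subseteq> H"
    and "\<And>A. A \<subseteq> carrier G \<Longrightarrow> A \<noteq> {} \<Longrightarrow>
      lam * real (card A) + real (dim (act_span scale \<rho> H Y)) - lam * real (card H)
        \<le> real (dim (act_span scale \<rho> A Y))"
proof -
  define f where "f A = real (dim (act_span scale \<rho> A Y)) - lam * real (card A)" for A
  have invariant: "f (g <# A) = f A" if "g \<in> carrier G" "A \<subseteq> carrier G" for g A
    using that by (simp add: f_def dim_act_span_l_coset card_l_coset)
  have submodular: "f (A \<union> B) + f (A \<inter> B) \<le> f A + f B"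
    if "A \<subseteq> carrier G" "B \<subseteq> carrier G" for A B
  proof -
    have "finite A" "finite B" using that fin finite_subset by auto
    then have "card (A \<union> B) + card (A \<inter> B) = card A + card B" by (metis card_Un_Int)
    then have "lam * real (card (A \<union> B)) + lam * real (card (A \<inter> B))
        = lam * real (card A) + lam * real (card B)"
      by (metis distrib_left of_nat_add)
    moreover have "real (dim (act_span scale \<rho> (A \<union> B) Y)) + real (dim (act_span scale \<rho> (A \<inter> B) Y))
        \<le> real (dim (act_span scale \<rho> A Y)) + real (dim (act_span scale \<rho> B Y))"
      using dim_act_span_Un_Int by (metis of_nat_add of_nat_mono)
    ultimately show ?thesis unfolding f_def by linarith
  qed
  obtain H where H: "subgroup H G" and minimal: "\<And>A. A \<subseteq> carrier G \<Longrightarrow> A \<noteq> {} \<Longrightarrow> f H \<le> f A"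
    and maximal: "\<And>K. K \<subseteq> carrier G \<Longrightarrow> H \<subseteq> K \<Longrightarrow> f K \<le> f H \<Longrightarrow> K = H"
    using submodular_invariant_minimiser_subgroup[OF fin invariant submodular] by blast
  have H_carrier: "H \<subseteq> carrier G" using H by (rule subgroup.subset)
  have "stab G scale \<rho> Y \<subseteq> H"
  proof
    fix s assume s: "s \<in> stab G scale \<rho> Y"
    then have s_carrier: "s \<in> carrier G" by (simp add: stab_def)
    let ?K = "H \<union> (H #> s)"
    have K_carrier: "?K \<subseteq> carrier G" using H_carrier r_coset_subset_G[OF H_carrier s_carrier] by blast
    then have "finite ?K" using fin by (rule finite_subset)
    then have "card H \<le> card ?K" by (simp add: card_mono)
    then have "f ?K \<le> f H"
      unfolding f_def act_span_Un_r_coset_stab[OF s H_carrier] using \<open>0 \<le> lam\<close>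
      by (simp add: mult_left_mono)
    then have "?K = H" using maximal[OF K_carrier] by blast
    then show "s \<in> H" using rcos_self[OF s_carrier H] by blast
  qed
  with H show thesis using minimal unfolding f_def by (intro that) (auto simp: algebra_simps)
qed

end

theorem mainTheorem12:
  fixes G :: "('g, 'm) monoid_scheme"
    and scale :: "'k::field \<Rightarrow> 'v::ab_group_add \<Rightarrow> 'v"
    and \<rho> :: "'g \<Rightarrow> 'v \<Rightarrow> 'v"
    and Y :: "'v set"
  assumes "group G"
    and "vector_space scale"
    and "\<exists>B. finite B \<and> module.span scale B = UNIV"
    and "is_rep G scale \<rho>"
    and "module.subspace scale Y"
  defines "\<mu> \<equiv> Inf {real (vector_space.dim scale (act_span scale \<rho> A Y)) / real (card A) | A.
                     A \<subseteq> carrier G \<and> finite A \<and> A \<noteq> {}}"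
  shows "\<mu> = 0 \<or>
    (\<forall>lam\<in>{0..\<mu>}. \<exists>H. subgroup H G \<and> finite H \<and> stab G scale \<rho> Y \<subseteq> H \<and>
       (\<forall>A. A \<subseteq> carrier G \<and> finite A \<and> A \<noteq> {} \<longrightarrow>
          real (vector_space.dim scale (act_span scale \<rho> A Y))
            \<ge> lam * real (card A) + real (vector_space.dim scale (act_span scale \<rho> H Y)) - lam * real (card H)
          \<and> lam * real (card A) + real (vector_space.dim scale (act_span scale \<rho> H Y)) - lam * real (card H)
            \<ge> lam * real (card A) + real (vector_space.dim scale Y) - lam * real (card H)))"
proof -
  interpret group G by fact
  interpret vector_space scale by fact
  obtain Basis where "finite_dimensional_vector_space scale Basis"
    using assms(3) obtain_finite_dimensional_basis by blast
  then interpret linear_representation G scale Basis \<rho>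
    using assms(1,4) by (simp add: linear_representation_def linear_representation_axioms_def)
  let ?D = "\<lambda>A. real (dim (act_span scale \<rho> A Y))"
  show ?thesis
  proof (cases "\<mu> = 0")
    case False
    then have "finite (carrier G)" unfolding \<mu>_def
      by (rule finite_if_Inf_card_ratio_nonzero) (rule dim_subset_UNIV)
    show ?thesis
    proof (intro disjI2 ballI)
      fix lam assume "lam \<in> {0..\<mu>}"
      \<comment> \<open>Once \<open>G\<close> is finite only \<open>0 \<le> lam\<close> matters, and \<open>Y\<close> need not be a subspace.\<close>
      then have "0 \<le> lam" by simp
      then obtain H where H: "subgroup H G" "stab G scale \<rho> Y \<subseteq> H"
        and "\<And>A. A \<subseteq> carrier G \<Longrightarrow> A \<noteq> {} \<Longrightarrow>
          lam * real (card A) + ?D H - lam * real (card H) \<le> ?D A"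
        using subgroup_dim_act_span_lower_bound[where Y = Y, OF \<open>finite (carrier G)\<close>] by blast
      moreover have "finite H" using H(1) \<open>finite (carrier G)\<close> subgroup.subset finite_subset by blast
      moreover have "dim Y \<le> dim (act_span scale \<rho> H Y)"
        using subgroup.one_closed[OF H(1)] by (intro dim_subset subset_act_span)
      ultimately show "\<exists>H. subgroup H G \<and> finite H \<and> stab G scale \<rho> Y \<subseteq> H \<and>
        (\<forall>A. A \<subseteq> carrier G \<and> finite A \<and> A \<noteq> {} \<longrightarrow>
          ?D A \<ge> lam * real (card A) + ?D H - lam * real (card H) \<and>
          lam * real (card A) + ?D H - lam * real (card H)
            \<ge> lam * real (card A) + real (dim Y) - lam * real (card H))"
        by (intro exI[of _ H]) auto
    qed
  qed simp
qed

end
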